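(* Let $H$ be a graph, $v\in V(H)$, and let $G$ be the graph obtained from $H$ by attaching a path at $v$: new vertices $v_1,\ldots,v_m$ are added together with the edges $\{v_{i},v_{i+1}\}$ for $i=0,\ldots,m-1$, where $v_0=v$. If $A\in\mathcal{S}(G)$, $X\in\overline{\mathcal{S}_0}(G^c)$, and $AX-XA=0$, then $X\in\overline{\mathcal{S}_0}(G'^c)$, where $G'=G+\{\{v_i,v_j\}: 0\le i<j\le m\}$; that is, $x_{v_iv_j}=0$ for all $0\le i<j\le m$.
   Context: All graphs are finite, simple, undirected. For a graph $G$ on $n$ vertices labelled $1,\ldots,n$, $\mathcal{S}(G)$ is the set of real symmetric $n\times n$ matrices $A=(a_{ij})$ with $a_{ij}\neq0$ iff $\{i,j\}\in E(G)$ for $i\neq j$ (diagonal arbitrary). For a graph $K$ on the same vertex set, $\overline{\mathcal{S}_0}(K)$ is the set of real symmetric matrices whose $(i,j)$ entry is zero whenever $i=j$ or $\{i,j\}\notin E(K)$; $K^c$ is the complement of $K$. $G+F$ denotes the graph obtained from $G$ by adding the edge set $F$. *)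

theory Defs
  imports Complex_Main
begin

text \<open>A finite simple graph: finite vertex set V and a symmetric,
irreflexive edge relation E on V. Matrices indexed by V are functions
'a => 'a => real (only entries on V x V matter).\<close>

definition simple_graph :: "'a set \<Rightarrow> ('a \<Rightarrow> 'a \<Rightarrow> bool) \<Rightarrow> bool" where
  "simple_graph V E \<longleftrightarrow> finite V \<and> (\<forall>x y. E x y \<longrightarrow> x \<in> V \<and> y \<in> V)
     \<and> (\<forall>x y. E x y \<longrightarrow> E y x) \<and> (\<forall>x. \<not> E x x)"

definition sym_on :: "'a set \<Rightarrow> ('a \<Rightarrow> 'a \<Rightarrow> real) \<Rightarrow> bool" where
  "sym_on V A \<longleftrightarrow> (\<forall>i\<in>V. \<forall>j\<in>V. A i j = A j i)"

definition S_mat :: "'a set \<Rightarrow> ('a \<Rightarrow> 'a \<Rightarrow> bool) \<Rightarrow> ('a \<Rightarrow> 'a \<Rightarrow> real) \<Rightarrow> bool" where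
  "S_mat V E A \<longleftrightarrow> sym_on V A \<and> (\<forall>i\<in>V. \<forall>j\<in>V. i \<noteq> j \<longrightarrow> (A i j \<noteq> 0 \<longleftrightarrow> E i j))"

definition S0bar :: "'a set \<Rightarrow> ('a \<Rightarrow> 'a \<Rightarrow> bool) \<Rightarrow> ('a \<Rightarrow> 'a \<Rightarrow> real) \<Rightarrow> bool" where
  "S0bar V K X \<longleftrightarrow> sym_on V X \<and> (\<forall>i\<in>V. \<forall>j\<in>V. (i = j \<or> \<not> K i j) \<longrightarrow> X i j = 0)"

definition compl_graph :: "'a set \<Rightarrow> ('a \<Rightarrow> 'a \<Rightarrow> bool) \<Rightarrow> 'a \<Rightarrow> 'a \<Rightarrow> bool" where
  "compl_graph V E x y \<longleftrightarrow> x \<in> V \<and> y \<in> V \<and> x \<noteq> y \<and> \<not> E x y"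

definition mat_mul :: "'a set \<Rightarrow> ('a \<Rightarrow> 'a \<Rightarrow> real) \<Rightarrow> ('a \<Rightarrow> 'a \<Rightarrow> real) \<Rightarrow> 'a \<Rightarrow> 'a \<Rightarrow> real" where
  "mat_mul V A B i j = (\<Sum>k\<in>V. A i k * B k j)"

text \<open>G obtained from H by attaching the path p 0 = v, p 1, ..., p m at v\<close>
definition path_verts :: "'a set \<Rightarrow> (nat \<Rightarrow> 'a) \<Rightarrow> nat \<Rightarrow> 'a set" where
  "path_verts VH p m = VH \<union> p ` {1..m}"

definition path_edges :: "('a \<Rightarrow> 'a \<Rightarrow> bool) \<Rightarrow> (nat \<Rightarrow> 'a) \<Rightarrow> nat \<Rightarrow> 'a \<Rightarrow> 'a \<Rightarrow> bool" where
  "path_edges EH p m x y \<longleftrightarrow> EH x y \<or>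
     (\<exists>i<m. (x = p i \<and> y = p (Suc i)) \<or> (x = p (Suc i) \<and> y = p i))"

definition add_path_clique :: "('a \<Rightarrow> 'a \<Rightarrow> bool) \<Rightarrow> (nat \<Rightarrow> 'a) \<Rightarrow> nat \<Rightarrow> 'a \<Rightarrow> 'a \<Rightarrow> bool" where
  "add_path_clique E p m x y \<longleftrightarrow> E x y \<or>
     (\<exists>i j. i < j \<and> j \<le> m \<and> ((x = p i \<and> y = p j) \<or> (x = p j \<and> y = p i)))"

end

theory Submission
  imports Defs
begin

text \<open>For \<open>1 \<le> l \<le> m\<close> the row of \<open>A\<close> at \<open>p l\<close> is supported on \<open>p (l - 1), p l, p (l + 1)\<close>.
Comparing the entries of \<open>AX\<close> and \<open>XA\<close> at \<open>(p (a + 1), p b)\<close> therefore gives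
\<open>A (p (a + 1)) (p a) * X (p a) (p b) = X (p (a + 1)) (p (b + 1)) * A (p (b + 1)) (p b)\<close>
up to entries of \<open>X\<close> at pairs of path vertices that are closer together. As
\<open>A (p (a + 1)) (p a) \<noteq> 0\<close>, the entry \<open>X (p a) (p b)\<close> vanishes by induction on the distance
\<open>b - a\<close> and, for a fixed distance, downwards from \<open>b = m\<close>, where the shifted entry does not
exist. Distances \<open>0\<close> and \<open>1\<close> are covered by \<open>X \<in> S\<^sub>0(G\<^sup>c)\<close>.\<close>

lemma mat_mul_eq_single_term:
  assumes "finite V" "k\<^sub>0 \<in> V" "\<And>k. k \<in> V \<Longrightarrow> k \<noteq> k\<^sub>0 \<Longrightarrow> A i k * B k j = 0"
  shows "mat_mul V A B i j = A i k\<^sub>0 * B k\<^sub>0 j"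
  unfolding mat_mul_def using assms by (simp add: sum.remove sum.neutral)

locale commuting_pendant_path =
  fixes V :: "'a set" and A X :: "'a \<Rightarrow> 'a \<Rightarrow> real" and p :: "nat \<Rightarrow> 'a" and m :: nat
  assumes finite_V: "finite V"
    and path_in_V: "\<And>l. l \<le> m \<Longrightarrow> p l \<in> V"
    and A_sym: "sym_on V A"
    and commute: "\<And>i j. i \<in> V \<Longrightarrow> j \<in> V \<Longrightarrow> mat_mul V A X i j = mat_mul V X A i j"
    and A_row_on_path: "\<And>l k. 1 \<le> l \<Longrightarrow> l \<le> m \<Longrightarrow> k \<in> V \<Longrightarrow> A (p l) k \<noteq> 0 \<Longrightarrow>
                          k = p (l - 1) \<or> k = p l \<or> (l < m \<and> k = p (Suc l))"
    and A_path_link: "\<And>l. l < m \<Longrightarrow> A (p (Suc l)) (p l) \<noteq> 0"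
    and X_path_diag: "\<And>l. l \<le> m \<Longrightarrow> X (p l) (p l) = 0"
    and X_path_link: "\<And>l. l < m \<Longrightarrow> X (p l) (p (Suc l)) = 0"
begin

lemma X_path_zero_step:
  assumes ab: "Suc a < b" "b \<le> m"
    and closer: "\<And>a' b'. a' < b' \<Longrightarrow> b' \<le> m \<Longrightarrow> b' - a' < b - a \<Longrightarrow> X (p a') (p b') = 0"
    and shifted: "b < m \<Longrightarrow> X (p (Suc a)) (p (Suc b)) = 0"
  shows "X (p a) (p b) = 0"
proof -
  have near: "X (p a') (p b') = 0" if "a' \<le> b'" "b' \<le> m" "b' - a' < b - a" for a' b'
    using closer[of a' b'] X_path_diag[of a'] that by (cases "a' = b'") auto
  have AX: "mat_mul V A X (p (Suc a)) (p b) = A (p (Suc a)) (p a) * X (p a) (p b)"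
  proof (rule mat_mul_eq_single_term[OF finite_V path_in_V])
    fix k assume k: "k \<in> V" "k \<noteq> p a"
    show "A (p (Suc a)) k * X k (p b) = 0"
    proof (cases "A (p (Suc a)) k = 0")
      case False
      with k ab have "k = p (Suc a) \<or> k = p (Suc (Suc a))"
        using A_row_on_path[of "Suc a" k] by auto
      moreover have "b - Suc a < b - a" "b - Suc (Suc a) < b - a" using ab by linarith+
      ultimately show ?thesis using ab near[of "Suc a" b] near[of "Suc (Suc a)" b] by auto
    qed simp
  qed (use ab in simp)
  have XA: "mat_mul V X A (p (Suc a)) (p b) = 0"
    unfolding mat_mul_def
  proof (rule sum.neutral, rule ballI)
    fix k assume k: "k \<in> V"
    show "X (p (Suc a)) k * A k (p b) = 0"
    proof (cases "A k (p b) = 0")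
      case False
      then have "A (p b) k \<noteq> 0"
        using A_sym k path_in_V[OF ab(2)] unfolding sym_on_def by metis
      with k ab have "k = p (b - 1) \<or> k = p b \<or> (b < m \<and> k = p (Suc b))"
        using A_row_on_path[of b k] by auto
      with ab show ?thesis using near[of "Suc a" "b - 1"] near[of "Suc a" b] shifted by auto
    qed simp
  qed
  have "A (p (Suc a)) (p a) * X (p a) (p b) = 0"
    using commute[OF path_in_V path_in_V, of "Suc a" b] AX XA ab by simp
  then show ?thesis using A_path_link[of a] ab by simp
qed

lemma X_path_zero:
  assumes "a < b" "b \<le> m"
  shows "X (p a) (p b) = 0"
proof -
  have "X (p a) (p (a + d)) = 0" if "0 < d" "a + d \<le> m" for d a
    using that
  proof (induction d arbitrary: a rule: less_induct)
    case (less d)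
    note shorter = less.IH
    from less.prems show ?case
    proof (induction "m - (a + d)" arbitrary: a rule: less_induct)
      case (less a)
      show ?case
      proof (cases "d = 1")
        case True
        then show ?thesis using X_path_link[of a] less.prems by simp
      next
        case False
        show ?thesis
        proof (rule X_path_zero_step)
          fix a' b' assume "a' < b'" "b' \<le> m" "b' - a' < a + d - a"
          then show "X (p a') (p b') = 0" using shorter[of "b' - a'" a'] by simp
        next
          assume "a + d < m"
          then show "X (p (Suc a)) (p (Suc (a + d))) = 0"
            using less.hyps[of "Suc a"] less.prems by simp
        qed (use False less.prems in auto)
      qed
    qed
  qed
  from this[of "b - a" a] assms show ?thesis by simp
qed

end

lemma path_edges_at_attached_vertex:
  assumes H: "simple_graph VH EH"
    and inj: "inj_on p {0..m}"
    and new: "p ` {1..m} \<inter> VH = {}"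
    and l: "1 \<le> l" "l \<le> m"
    and edge: "path_edges EH p m (p l) k"
  shows "k = p (l - 1) \<or> (l < m \<and> k = p (Suc l))"
proof -
  have "p l \<notin> VH" using new l by (auto simp: disjoint_iff)
  then have "\<not> EH (p l) k" using H unfolding simple_graph_def by blast
  with edge obtain i where i: "i < m"
    "(p l = p i \<and> k = p (Suc i)) \<or> (p l = p (Suc i) \<and> k = p i)"
    unfolding path_edges_def by auto
  then have "(l = i \<and> k = p (Suc i)) \<or> (l = Suc i \<and> k = p i)"
    using inj l unfolding inj_on_def by (metis atLeastAtMost_iff le0 less_imp_le_nat Suc_leI)
  with i(1) show ?thesis by auto
qed

lemma commuting_pendant_path_attached:
  assumes H: "simple_graph VH EH"
    and v: "p 0 \<in> VH"
    and inj: "inj_on p {0..m}"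
    and new: "p ` {1..m} \<inter> VH = {}"
    and A: "S_mat (path_verts VH p m) (path_edges EH p m) A"
    and X: "S0bar (path_verts VH p m) (compl_graph (path_verts VH p m) (path_edges EH p m)) X"
    and comm: "\<forall>i\<in>path_verts VH p m. \<forall>j\<in>path_verts VH p m.
                 mat_mul (path_verts VH p m) A X i j - mat_mul (path_verts VH p m) X A i j = 0"
  shows "commuting_pendant_path (path_verts VH p m) A X p m"
proof -
  define V where "V = path_verts VH p m"
  define E where "E = path_edges EH p m"
  have path_in_V: "p l \<in> V" if "l \<le> m" for l
    using v that unfolding V_def path_verts_def by (cases "l = 0") auto
  have A_edge: "A i j \<noteq> 0 \<longleftrightarrow> E i j" if "i \<in> V" "j \<in> V" "i \<noteq> j" for i j
    using A that unfolding S_mat_def V_def E_def by blast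
  have X_zero: "X i j = 0" if "i \<in> V" "j \<in> V" "i = j \<or> E i j" for i j
    using X that unfolding S0bar_def compl_graph_def V_def E_def by blast
  have link: "p l \<noteq> p (Suc l)" "E (p l) (p (Suc l))" "E (p (Suc l)) (p l)" if "l < m" for l
    using inj_on_eq_iff[OF inj, of l "Suc l"] that unfolding E_def path_edges_def by auto
  show ?thesis
    unfolding V_def[symmetric]
  proof
    show "finite V"
      using H unfolding V_def path_verts_def simple_graph_def by simp
    show "sym_on V A" using A unfolding S_mat_def V_def by simp
    show "mat_mul V A X i j = mat_mul V X A i j" if "i \<in> V" "j \<in> V" for i j
      using comm that unfolding V_def by simp
    show "k = p (l - 1) \<or> k = p l \<or> (l < m \<and> k = p (Suc l))"
      if "1 \<le> l" "l \<le> m" "k \<in> V" "A (p l) k \<noteq> 0" for l k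
      using path_edges_at_attached_vertex[OF H inj new, of l k] A_edge[of "p l" k] path_in_V that
      unfolding E_def by blast
    show "A (p (Suc l)) (p l) \<noteq> 0" if "l < m" for l
      using A_edge link[OF that] path_in_V that by simp
  qed (use path_in_V X_zero link in auto)
qed

theorem corollary3p7:
  fixes VH :: "'a set" and EH :: "'a \<Rightarrow> 'a \<Rightarrow> bool" and v :: 'a
    and p :: "nat \<Rightarrow> 'a" and m :: nat and A X :: "'a \<Rightarrow> 'a \<Rightarrow> real"
  assumes H: "simple_graph VH EH"
    and v: "v \<in> VH"
    and p0: "p 0 = v"
    and pinj: "inj_on p {0..m}"
    and pnew: "p ` {1..m} \<inter> VH = {}"
    and A: "S_mat (path_verts VH p m) (path_edges EH p m) A"
    and X: "S0bar (path_verts VH p m) (compl_graph (path_verts VH p m) (path_edges EH p m)) X"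
    and comm: "\<forall>i\<in>path_verts VH p m. \<forall>j\<in>path_verts VH p m.
                 mat_mul (path_verts VH p m) A X i j - mat_mul (path_verts VH p m) X A i j = 0"
  shows "S0bar (path_verts VH p m)
           (compl_graph (path_verts VH p m) (add_path_clique (path_edges EH p m) p m)) X"
proof -
  define V where "V = path_verts VH p m"
  interpret commuting_pendant_path V A X p m
    using commuting_pendant_path_attached[OF H _ pinj pnew A X comm] v p0 unfolding V_def by simp
  have X_sym: "X i j = X j i" if "i \<in> V" "j \<in> V" for i j
    using X that unfolding S0bar_def sym_on_def V_def by blast
  have "X (p a) (p b) = 0" "X (p b) (p a) = 0" if "a < b" "b \<le> m" for a b
    using X_path_zero[OF that] X_sym[OF path_in_V path_in_V, of a b] that by auto
  then show ?thesis
    using X unfolding S0bar_def compl_graph_def add_path_clique_def V_def[symmetric]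
    by blast
qed

end
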